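(* Let $q$ be a prime power and $\mathcal{L}$ a non-empty set of lines of $\mathrm{PG}(n,q)$ satisfying (Pt), (Pl), (Sd) and (To) (see context). Let $M$ be a subspace of $\mathrm{PG}(n,q)$, and let $\ell\in\mathcal{L}\setminus\mathcal{L}_M$ be a line that meets a line $s\in\mathcal{L}_M$. Then: (a) $s$ is the only line of $\mathcal{L}_M$ meeting $\ell$. (b) If $\ell^M\in\mathcal{L}_M$ meets $s$ in exactly one point, then $\mathcal{L}_{\langle \ell^M,\ell\rangle}=\mathcal{L}_{\langle \ell^M,s\rangle}\cup\mathcal{L}_{\langle s,\ell\rangle}$. (c) If $\ell^M_1,\ell^M_2\in\mathcal{L}_M$ meet $s$ in exactly one point $P$, resp. $Q$, then $\mathcal{L}_{\langle \ell^M_1,\ell\rangle}\cap\mathcal{L}_{\langle \ell^M_2,\ell\rangle}=\mathcal{L}_{\langle \ell^M_1,\ell\rangle}$ if $P=Q$, and $=\mathcal{L}_{\langle s,\ell\rangle}$ if $P\ne Q$. (d) If $\ell^M_1\in\mathcal{L}_M$ meets $s$ in exactly one point and $\ell^M_2\in\mathcal{L}_M$ is disjoint from $s$, then $\mathcal{L}_{\langle \ell^M_1,\ell\rangle}\cap\mathcal{L}_{\langle \ell^M_2,\ell\rangle}=\{\ell\}$.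
   Context: (Pt): every point of $\mathrm{PG}(n,q)$ lies on $0$ or $q+1$ lines of $\mathcal{L}$. (Pl): every plane contains $0$, $1$ or $q+1$ lines of $\mathcal{L}$. (Sd): every solid ($3$-dimensional subspace) contains $0$, $1$, $q+1$ or $2q+1$ lines of $\mathcal{L}$. (To): $|\mathcal{L}|\le q^5+q^4+q^3+q^2+q+1$. For a subspace $W$, $\mathcal{L}_W$ denotes the set of lines of $\mathcal{L}$ contained in $W$; $\langle X,Y\rangle$ denotes the subspace spanned by $X$ and $Y$. *)

theory Defs
  imports "HOL-Analysis.Analysis"
begin

text \<open>Model of PG(n,q): the projective space of the vector space 'a^'n over a finite
field 'a with CARD('a) = q, where CARD('n) = n+1. Projective subspaces are linear
subspaces; a projective subspace of projective dimension k is a linear subspace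
of (vector) dimension k+1.\<close>

definition pg_subspace :: "('a::field ^ 'n) set \<Rightarrow> bool" where
  "pg_subspace W \<longleftrightarrow> vec.subspace W"

definition pg_point :: "('a::field ^ 'n) set \<Rightarrow> bool" where
  "pg_point W \<longleftrightarrow> vec.subspace W \<and> vec.dim W = 1"

definition pg_line :: "('a::field ^ 'n) set \<Rightarrow> bool" where
  "pg_line W \<longleftrightarrow> vec.subspace W \<and> vec.dim W = 2"

definition pg_plane :: "('a::field ^ 'n) set \<Rightarrow> bool" where
  "pg_plane W \<longleftrightarrow> vec.subspace W \<and> vec.dim W = 3"

definition pg_solid :: "('a::field ^ 'n) set \<Rightarrow> bool" where
  "pg_solid W \<longleftrightarrow> vec.subspace W \<and> vec.dim W = 4"

definition pg_join :: "('a::field ^ 'n) set \<Rightarrow> ('a ^ 'n) set \<Rightarrow> ('a ^ 'n) set" where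
  "pg_join X Y = vec.span (X \<union> Y)"

definition pg_meet :: "('a::field ^ 'n) set \<Rightarrow> ('a ^ 'n) set \<Rightarrow> bool" where
  "pg_meet X Y \<longleftrightarrow> (\<exists>P. pg_point P \<and> P \<subseteq> X \<and> P \<subseteq> Y)"

definition pg_meet_in_point :: "('a::field ^ 'n) set \<Rightarrow> ('a ^ 'n) set \<Rightarrow> ('a ^ 'n) set \<Rightarrow> bool" where
  "pg_meet_in_point X Y P \<longleftrightarrow> pg_point P \<and> X \<inter> Y = P"

definition lines_in :: "('a::field ^ 'n) set set \<Rightarrow> ('a ^ 'n) set \<Rightarrow> ('a ^ 'n) set set" where
  "lines_in L W = {l \<in> L. l \<subseteq> W}"

definition cond_Pt :: "('a::{field,finite} ^ 'n) set set \<Rightarrow> bool" where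
  "cond_Pt L \<longleftrightarrow> (\<forall>P. pg_point P \<longrightarrow>
      card {l \<in> L. P \<subseteq> l} = 0 \<or> card {l \<in> L. P \<subseteq> l} = CARD('a) + 1)"

definition cond_Pl :: "('a::{field,finite} ^ 'n) set set \<Rightarrow> bool" where
  "cond_Pl L \<longleftrightarrow> (\<forall>\<pi>. pg_plane \<pi> \<longrightarrow> card (lines_in L \<pi>) \<in> {0, 1, CARD('a) + 1})"

definition cond_Sd :: "('a::{field,finite} ^ 'n) set set \<Rightarrow> bool" where
  "cond_Sd L \<longleftrightarrow> (\<forall>S. pg_solid S \<longrightarrow>
      card (lines_in L S) \<in> {0, 1, CARD('a) + 1, 2 * CARD('a) + 1})"

definition cond_To :: "('a::{field,finite} ^ 'n) set set \<Rightarrow> bool" where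
  "cond_To L \<longleftrightarrow> (let q = CARD('a) in card L \<le> q^5 + q^4 + q^3 + q^2 + q + 1)"

end

theory Submission
  imports Defs
begin

text \<open>Three lines of \<L> through a common point are coplanar: otherwise they span a solid
containing three planes with \<open>q+1\<close> lines each, any two of which share at most one line,
so the solid would contain at least \<open>3q > 2q+1\<close> lines. Hence, by (Pt), the lines of \<L> in
a plane spanned by two lines of \<L> form the pencil through their common point.

The line \<open>l\<close> meets \<open>M\<close> in the single point \<open>l \<inter> s\<close>, so a second line of \<open>\<L>\<^sub>M\<close> meeting
\<open>l\<close> would pass through this point as well, and coplanarity of the three concurrent lines
would put \<open>l\<close> into \<open>M\<close>; this is (a). If \<open>x \<in> \<L>\<^sub>M\<close>
meets \<open>s\<close> in a point, the solid \<open>\<langle>x,l\<rangle>\<close> contains the planes \<open>\<langle>x,s\<rangle>\<close> and \<open>\<langle>s,l\<rangle>\<close>, which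
share only \<open>s\<close>; their \<open>2q+1\<close> lines exhaust the solid by (Sd), which is (b). Part (c)
follows by comparing the pencils in \<open>\<langle>x,s\<rangle>\<close>, and (d) because a line in both solids other
than \<open>l\<close> would meet \<open>l\<close> and thereby drag \<open>s\<close> into the second solid.\<close>

lemma subspace_pg_join [simp]: "vec.subspace (pg_join X Y)"
  unfolding pg_join_def by (rule vec.subspace_span)

lemma pg_join_superset: "X \<subseteq> pg_join X Y" "Y \<subseteq> pg_join X Y"
  unfolding pg_join_def using vec.span_superset by blast+

lemma pg_join_subset_iff:
  "vec.subspace W \<Longrightarrow> pg_join X Y \<subseteq> W \<longleftrightarrow> X \<subseteq> W \<and> Y \<subseteq> W"
  unfolding pg_join_def by (meson le_sup_iff order_trans vec.span_minimal vec.span_superset)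

lemma dim_pg_join_Int:
  assumes "vec.subspace X" "vec.subspace Y"
  shows "vec.dim (pg_join X Y) + vec.dim (X \<inter> Y) = vec.dim X + vec.dim Y"
proof -
  have span: "vec.span X = X" "vec.span Y = Y"
    using assms by simp_all
  have "pg_join X Y = {x + y |x y. x \<in> X \<and> y \<in> Y}"
    by (simp only: pg_join_def vec.span_Un span)
  then show ?thesis
    using vec.dim_sums_Int[OF assms] by simp
qed

lemma dim_add_le_dim_Int:
  assumes "vec.subspace X" "vec.subspace Y" "vec.subspace W" "X \<subseteq> W" "Y \<subseteq> W"
  shows "vec.dim X + vec.dim Y \<le> vec.dim W + vec.dim (X \<inter> Y)"
proof -
  have "vec.dim (pg_join X Y) \<le> vec.dim W"
    using assms by (simp add: pg_join_subset_iff vec.dim_subset)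
  then show ?thesis
    using dim_pg_join_Int[OF assms(1,2)] by linarith
qed

lemma dim_less_of_psubset:
  assumes "vec.subspace X" "vec.subspace Y" "X \<subset> Y"
  shows "vec.dim X < vec.dim Y"
proof -
  have span: "vec.span X = X" "vec.span Y = Y"
    using assms(1,2) by simp_all
  show ?thesis
    using vec.dim_psubset[of X Y] assms(3) unfolding span by blast
qed

lemma dim_Int_less_of_ne:
  assumes "vec.subspace X" "vec.subspace Y" "vec.dim X = vec.dim Y" "X \<noteq> Y"
  shows "vec.dim (X \<inter> Y) < vec.dim X"
proof (rule ccontr)
  assume "\<not> ?thesis"
  then have "X \<inter> Y = X" "X \<inter> Y = Y"
    using assms vec.subspace_inter[OF assms(1,2)] vec.subspace_dim_equal[of "X \<inter> Y"]
    by (metis inf_le1 inf_le2 not_less)+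
  with assms(4) show False
    by simp
qed

lemma pg_meet_iff_dim_Int:
  assumes "vec.subspace X" "vec.subspace Y"
  shows "pg_meet X Y \<longleftrightarrow> 1 \<le> vec.dim (X \<inter> Y)"
proof
  assume "pg_meet X Y"
  then obtain P where "pg_point P" "P \<subseteq> X \<inter> Y"
    unfolding pg_meet_def by blast
  then show "1 \<le> vec.dim (X \<inter> Y)"
    unfolding pg_point_def by (metis vec.dim_subset)
next
  assume "1 \<le> vec.dim (X \<inter> Y)"
  then have "\<not> X \<inter> Y \<subseteq> {0}"
    using vec.dim_eq_0 by (metis not_one_le_zero)
  then obtain v where v: "v \<in> X \<inter> Y" "v \<noteq> 0"
    by blast
  then have "vec.dim (vec.span {v}) = 1"
    by (simp add: vec.dim_span_eq_card_independent vec.independent_insert)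
  moreover have "vec.span {v} \<subseteq> X \<inter> Y"
    using v assms by (simp add: vec.span_minimal vec.subspace_inter)
  ultimately show "pg_meet X Y"
    unfolding pg_meet_def pg_point_def using vec.subspace_span by blast
qed

lemma pg_meet_commute: "pg_meet X Y \<longleftrightarrow> pg_meet Y X"
  unfolding pg_meet_def by blast

lemma pg_point_Int_of_meet:
  assumes "pg_line X" "pg_line Y" "X \<noteq> Y" "pg_meet X Y"
  shows "pg_point (X \<inter> Y)"
  using assms dim_Int_less_of_ne[of X Y] pg_meet_iff_dim_Int[of X Y] vec.subspace_inter[of X Y]
  unfolding pg_line_def pg_point_def by fastforce

lemma pg_line_eq_pg_join_points:
  assumes "pg_point P" "pg_point Q" "P \<noteq> Q" "pg_line z" "P \<subseteq> z" "Q \<subseteq> z"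
  shows "z = pg_join P Q"
proof -
  have PQ: "vec.subspace P" "vec.subspace Q" "vec.dim P = 1" "vec.dim Q = 1"
    using assms unfolding pg_point_def by auto
  then have "vec.dim (P \<inter> Q) = 0"
    using dim_Int_less_of_ne[of P Q] assms(3) by simp
  then have "vec.dim (pg_join P Q) = 2"
    using dim_pg_join_Int[OF PQ(1,2)] PQ(3,4) by linarith
  moreover have "pg_join P Q \<subseteq> z"
    using assms pg_join_subset_iff[of z P Q] unfolding pg_line_def by simp
  ultimately show ?thesis
    using vec.subspace_dim_equal[of "pg_join P Q" z] assms(4) unfolding pg_line_def by simp
qed

lemma pg_solid_join_plane_line:
  assumes "pg_plane \<pi>" "pg_line c" "\<not> c \<subseteq> \<pi>" "pg_meet \<pi> c"
  shows "pg_solid (pg_join \<pi> c)"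
proof -
  have sub: "vec.subspace \<pi>" "vec.subspace c" "vec.subspace (\<pi> \<inter> c)"
    using assms(1,2) unfolding pg_plane_def pg_line_def by (simp_all add: vec.subspace_inter)
  have "\<pi> \<inter> c \<subset> c"
    using assms(3) by blast
  then have "vec.dim (\<pi> \<inter> c) < 2"
    using dim_less_of_psubset[OF sub(3,2)] assms(2) unfolding pg_line_def by simp
  moreover have "1 \<le> vec.dim (\<pi> \<inter> c)"
    using assms(4) pg_meet_iff_dim_Int[OF sub(1,2)] by simp
  ultimately have "vec.dim (pg_join \<pi> c) = 4"
    using dim_pg_join_Int[OF sub(1,2)] assms(1,2) unfolding pg_plane_def pg_line_def by simp
  then show ?thesis
    unfolding pg_solid_def by simp
qed

lemma pg_solid_join_of_not_meet:
  assumes "pg_line x" "pg_line y" "\<not> pg_meet x y"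
  shows "pg_solid (pg_join x y)"
proof -
  have sub: "vec.subspace x" "vec.subspace y" and dims: "vec.dim x = 2" "vec.dim y = 2"
    using assms(1,2) unfolding pg_line_def by simp_all
  have "\<not> 1 \<le> vec.dim (x \<inter> y)"
    using assms(3) pg_meet_iff_dim_Int[OF sub] by simp
  then have "vec.dim (pg_join x y) = 4"
    using dim_pg_join_Int[OF sub] dims by linarith
  then show ?thesis
    unfolding pg_solid_def by simp
qed

lemma card_Un3_ge:
  assumes "finite A" "finite B" "finite C"
  shows "card A + card B + card C
    \<le> card (A \<union> B \<union> C) + card (A \<inter> B) + card (A \<inter> C) + card (B \<inter> C)"
proof -
  have "card A + card B = card (A \<union> B) + card (A \<inter> B)"
    using card_Un_Int assms by blast
  moreover have "card (A \<union> B) + card C = card (A \<union> B \<union> C) + card ((A \<union> B) \<inter> C)"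
    using card_Un_Int assms by (metis finite_UnI)
  moreover have "card ((A \<union> B) \<inter> C) \<le> card (A \<inter> C) + card (B \<inter> C)"
    by (metis Int_Un_distrib2 card_Un_le)
  ultimately show ?thesis
    by linarith
qed

lemma two_le_card_field: "2 \<le> CARD('a::{field,finite})"
proof -
  have "card {0::'a, 1} \<le> CARD('a)"
    by (rule card_mono) simp_all
  then show ?thesis
    by simp
qed

lemma mem_lines_in_pg_join:
  "x \<in> L \<Longrightarrow> x \<in> lines_in L (pg_join x y)" "y \<in> L \<Longrightarrow> y \<in> lines_in L (pg_join x y)"
  unfolding lines_in_def using pg_join_superset by blast+

locale line_config =
  fixes L :: "('a::{field,finite}^'n) set set"
  assumes lines: "\<forall>x\<in>L. pg_line x" and Pl: "cond_Pl L" and Sd: "cond_Sd L"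
begin

lemma subspace_of_L: "x \<in> L \<Longrightarrow> vec.subspace x"
  using lines unfolding pg_line_def by blast

lemma dim_of_L: "x \<in> L \<Longrightarrow> vec.dim x = 2"
  using lines unfolding pg_line_def by blast

lemma pg_line_of_L: "x \<in> L \<Longrightarrow> pg_line x"
  using lines by blast

lemma pg_meet_of_dim_le_3:
  assumes "a \<in> L" "b \<in> L" "vec.subspace W" "vec.dim W \<le> 3" "a \<subseteq> W" "b \<subseteq> W"
  shows "pg_meet a b"
  using dim_add_le_dim_Int[of a b W] assms pg_meet_iff_dim_Int[of a b]
  by (simp add: subspace_of_L dim_of_L)

lemma pg_plane_join_lines:
  assumes "a \<in> L" "b \<in> L" "a \<noteq> b" "pg_meet a b"
  shows "pg_plane (pg_join a b)"
  using dim_pg_join_Int[of a b] dim_Int_less_of_ne[of a b] pg_meet_iff_dim_Int[of a b] assms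
  unfolding pg_plane_def by (simp add: subspace_of_L dim_of_L)

lemma pg_join_lines_eq:
  assumes "a \<in> L" "b \<in> L" "a \<noteq> b" "pg_meet a b" "pg_plane \<pi>" "a \<subseteq> \<pi>" "b \<subseteq> \<pi>"
  shows "pg_join a b = \<pi>"
  using pg_plane_join_lines[OF assms(1-4)] assms(5-7) pg_join_subset_iff[of \<pi> a b]
    vec.subspace_dim_equal[of "pg_join a b" \<pi>]
  unfolding pg_plane_def by simp

lemma card_lines_in_plane:
  assumes "pg_plane \<pi>" "a \<in> lines_in L \<pi>" "b \<in> lines_in L \<pi>" "a \<noteq> b"
  shows "card (lines_in L \<pi>) = CARD('a) + 1"
proof -
  have "2 \<le> card (lines_in L \<pi>)"
    using assms card_mono[of "lines_in L \<pi>" "{a, b}"] by simp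
  moreover have "card (lines_in L \<pi>) \<in> {0, 1, CARD('a) + 1}"
    using Pl assms(1) unfolding cond_Pl_def by blast
  ultimately show ?thesis
    by auto
qed

lemma card_lines_in_join_lines:
  assumes "a \<in> L" "b \<in> L" "a \<noteq> b" "pg_meet a b"
  shows "card (lines_in L (pg_join a b)) = CARD('a) + 1"
  using card_lines_in_plane[OF pg_plane_join_lines[OF assms]
      mem_lines_in_pg_join(1)[OF assms(1)] mem_lines_in_pg_join(2)[OF assms(2)] assms(3)] .

lemma card_lines_in_solid_le:
  "pg_solid S \<Longrightarrow> card (lines_in L S) \<le> 2 * CARD('a) + 1"
  using Sd unfolding cond_Sd_def by auto

lemma card_lines_in_Int_planes_le_1:
  assumes "pg_plane \<pi>\<^sub>1" "pg_plane \<pi>\<^sub>2" "\<pi>\<^sub>1 \<noteq> \<pi>\<^sub>2"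
  shows "card (lines_in L \<pi>\<^sub>1 \<inter> lines_in L \<pi>\<^sub>2) \<le> 1"
proof -
  have "vec.dim (\<pi>\<^sub>1 \<inter> \<pi>\<^sub>2) \<le> 2"
    using dim_Int_less_of_ne[of \<pi>\<^sub>1 \<pi>\<^sub>2] assms unfolding pg_plane_def by simp
  then have "x = \<pi>\<^sub>1 \<inter> \<pi>\<^sub>2" if "x \<in> lines_in L (\<pi>\<^sub>1 \<inter> \<pi>\<^sub>2)" for x
    using that assms vec.subspace_inter[of \<pi>\<^sub>1 \<pi>\<^sub>2] subspace_of_L dim_of_L
      vec.subspace_dim_equal[of x "\<pi>\<^sub>1 \<inter> \<pi>\<^sub>2"]
    unfolding lines_in_def pg_plane_def by simp
  then have "lines_in L \<pi>\<^sub>1 \<inter> lines_in L \<pi>\<^sub>2 \<subseteq> {\<pi>\<^sub>1 \<inter> \<pi>\<^sub>2}"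
    unfolding lines_in_def by blast
  then show ?thesis
    using card_mono[of "{\<pi>\<^sub>1 \<inter> \<pi>\<^sub>2}"] by fastforce
qed

lemma no_three_full_planes_in_solid:
  assumes "pg_solid S" "pg_plane \<pi>\<^sub>1" "pg_plane \<pi>\<^sub>2" "pg_plane \<pi>\<^sub>3"
    and "\<pi>\<^sub>1 \<noteq> \<pi>\<^sub>2" "\<pi>\<^sub>1 \<noteq> \<pi>\<^sub>3" "\<pi>\<^sub>2 \<noteq> \<pi>\<^sub>3" "\<pi>\<^sub>1 \<subseteq> S" "\<pi>\<^sub>2 \<subseteq> S" "\<pi>\<^sub>3 \<subseteq> S"
    and "card (lines_in L \<pi>\<^sub>1) = CARD('a) + 1" "card (lines_in L \<pi>\<^sub>2) = CARD('a) + 1"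
      "card (lines_in L \<pi>\<^sub>3) = CARD('a) + 1"
  shows False
proof -
  let ?A = "lines_in L \<pi>\<^sub>1" and ?B = "lines_in L \<pi>\<^sub>2" and ?C = "lines_in L \<pi>\<^sub>3"
  have "?A \<union> ?B \<union> ?C \<subseteq> lines_in L S"
    using assms(8-10) unfolding lines_in_def by blast
  then have "card (?A \<union> ?B \<union> ?C) \<le> 2 * CARD('a) + 1"
    using card_lines_in_solid_le[OF assms(1)] by (meson card_mono finite le_trans)
  moreover have "card (?A \<inter> ?B) \<le> 1" "card (?A \<inter> ?C) \<le> 1" "card (?B \<inter> ?C) \<le> 1"
    using card_lines_in_Int_planes_le_1 assms(2-7) by auto
  ultimately show False
    using card_Un3_ge[of ?A ?B ?C] assms(11-13) two_le_card_field[where 'a='a] by simp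
qed

lemma concurrent_lines_coplanar:
  assumes "a \<in> L" "b \<in> L" "c \<in> L" "a \<noteq> b" "a \<noteq> c" "b \<noteq> c"
    and "pg_point P" "P \<subseteq> a" "P \<subseteq> b" "P \<subseteq> c"
  shows "c \<subseteq> pg_join a b"
proof (rule ccontr)
  assume c_out: "\<not> c \<subseteq> pg_join a b"
  have meet: "pg_meet x y" if "P \<subseteq> x" "P \<subseteq> y" for x y
    using assms(7) that unfolding pg_meet_def by blast
  have meets: "pg_meet a b" "pg_meet a c" "pg_meet b c" "pg_meet (pg_join a b) c"
    using meet assms(8-10) pg_join_superset(1)[where X=a and Y=b] by blast+
  have planes: "pg_plane (pg_join a b)" "pg_plane (pg_join a c)" "pg_plane (pg_join b c)"
    using pg_plane_join_lines assms(1-6) meets(1-3) by blast+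
  define S where "S = pg_join (pg_join a b) c"
  have solid: "pg_solid S"
    unfolding S_def using pg_solid_join_plane_line[OF planes(1) pg_line_of_L[OF assms(3)] c_out meets(4)] .
  have ne: "pg_join a b \<noteq> pg_join a c" "pg_join a b \<noteq> pg_join b c"
    using c_out pg_join_superset by blast+
  have "pg_join a c \<noteq> pg_join b c"
  proof
    assume "pg_join a c = pg_join b c"
    then have "pg_join a b = pg_join a c"
      using pg_join_lines_eq[OF assms(1,2,4) meets(1) planes(2)] pg_join_superset by metis
    with ne show False
      by blast
  qed
  moreover have "a \<subseteq> S" "b \<subseteq> S" "c \<subseteq> S"
    using pg_join_superset unfolding S_def by blast+
  then have "pg_join a b \<subseteq> S" "pg_join a c \<subseteq> S" "pg_join b c \<subseteq> S"
    by (simp_all add: S_def pg_join_subset_iff)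
  moreover have "card (lines_in L (pg_join a b)) = CARD('a) + 1"
    "card (lines_in L (pg_join a c)) = CARD('a) + 1" "card (lines_in L (pg_join b c)) = CARD('a) + 1"
    using card_lines_in_join_lines assms(1-6) meets(1-3) by blast+
  ultimately show False
    using no_three_full_planes_in_solid[OF solid planes ne] by blast
qed

lemma lines_in_plane_eq_pencil:
  assumes Pt: "cond_Pt L" and "a \<in> L" "b \<in> L" "a \<noteq> b" "pg_point P" "P \<subseteq> a" "P \<subseteq> b"
  shows "lines_in L (pg_join a b) = {z \<in> L. P \<subseteq> z}"
proof -
  have "pg_meet a b"
    using assms unfolding pg_meet_def by blast
  then have plane: "card (lines_in L (pg_join a b)) = CARD('a) + 1"
    using card_lines_in_join_lines assms(2-4) by blast
  have "z \<subseteq> pg_join a b" if "z \<in> L" "P \<subseteq> z" for z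
    using concurrent_lines_coplanar[of a b z P] pg_join_superset that assms by blast
  then have pencil_sub: "{z \<in> L. P \<subseteq> z} \<subseteq> lines_in L (pg_join a b)"
    unfolding lines_in_def by blast
  have "card {z \<in> L. P \<subseteq> z} \<noteq> 0"
    using assms by (auto simp: card_eq_0_iff)
  then have "card {z \<in> L. P \<subseteq> z} = CARD('a) + 1"
    using Pt assms(5) unfolding cond_Pt_def by auto
  then show ?thesis
    using card_subset_eq[OF finite pencil_sub] plane by simp
qed

lemma lines_in_solid_eq_Un_planes:
  assumes "pg_solid S" "pg_plane \<pi>\<^sub>1" "pg_plane \<pi>\<^sub>2" "\<pi>\<^sub>1 \<noteq> \<pi>\<^sub>2" "\<pi>\<^sub>1 \<subseteq> S" "\<pi>\<^sub>2 \<subseteq> S"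
    and "card (lines_in L \<pi>\<^sub>1) = CARD('a) + 1" "card (lines_in L \<pi>\<^sub>2) = CARD('a) + 1"
    and "s \<in> lines_in L \<pi>\<^sub>1" "s \<in> lines_in L \<pi>\<^sub>2"
  shows "lines_in L S = lines_in L \<pi>\<^sub>1 \<union> lines_in L \<pi>\<^sub>2"
proof -
  let ?A = "lines_in L \<pi>\<^sub>1" and ?B = "lines_in L \<pi>\<^sub>2"
  have "card (?A \<inter> ?B) = 1"
    using card_lines_in_Int_planes_le_1[OF assms(2-4)] assms(9,10)
    by (metis IntI card_0_eq empty_iff finite le_antisym less_one not_le)
  then have "card (?A \<union> ?B) = 2 * CARD('a) + 1"
    using card_Un_Int[of ?A ?B] assms(7,8) by simp
  moreover have sub: "?A \<union> ?B \<subseteq> lines_in L S"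
    using assms(5,6) unfolding lines_in_def by blast
  ultimately show ?thesis
    using card_lines_in_solid_le[OF assms(1)] card_subset_eq[OF finite sub] card_mono[OF finite sub]
    by simp
qed

end

locale external_line = line_config L for L :: "('a::{field,finite}^'n) set set" +
  fixes M l s :: "('a^'n) set"
  assumes subspace_M: "vec.subspace M" and l: "l \<in> L" "\<not> l \<subseteq> M"
    and s: "s \<in> L" "s \<subseteq> M" and meet_l_s: "pg_meet l s"
begin

lemma l_ne_s: "l \<noteq> s"
  using l s by blast

lemma meet_s_l: "pg_meet s l"
  using meet_l_s by (simp add: pg_meet_commute)

lemma pg_point_l_Int_s: "pg_point (l \<inter> s)"
  using pg_point_Int_of_meet[OF pg_line_of_L[OF l(1)] pg_line_of_L[OF s(1)] l_ne_s meet_l_s] .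

lemma pg_plane_s_l: "pg_plane (pg_join s l)"
  using pg_plane_join_lines[OF s(1) l(1) l_ne_s[symmetric] meet_s_l] .

lemma l_Int_eq_l_Int_M:
  assumes "t \<in> L" "t \<subseteq> M" "pg_meet t l"
  shows "l \<inter> t = l \<inter> M"
proof -
  have sub: "vec.subspace (l \<inter> t)" "vec.subspace (l \<inter> M)"
    using subspace_of_L[OF l(1)] subspace_of_L[OF assms(1)] subspace_M
    by (simp_all add: vec.subspace_inter)
  have "l \<inter> M \<subset> l"
    using l by blast
  then have "vec.dim (l \<inter> M) < 2"
    using dim_less_of_psubset[OF sub(2) subspace_of_L[OF l(1)]] dim_of_L[OF l(1)] by simp
  moreover have "1 \<le> vec.dim (l \<inter> t)"
    using assms(3) pg_meet_iff_dim_Int[OF subspace_of_L[OF l(1)] subspace_of_L[OF assms(1)]]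
    by (simp add: pg_meet_commute)
  ultimately have "vec.dim (l \<inter> M) \<le> vec.dim (l \<inter> t)"
    by linarith
  moreover have "l \<inter> t \<subseteq> l \<inter> M"
    using assms(2) by blast
  ultimately show ?thesis
    using vec.subspace_dim_equal[OF sub] by simp
qed

lemma unique_meeting_line:
  assumes "t \<in> L" "t \<subseteq> M" "pg_meet t l"
  shows "t = s"
proof (rule ccontr)
  assume "t \<noteq> s"
  have "l \<inter> s \<subseteq> t"
    using l_Int_eq_l_Int_M[OF assms] l_Int_eq_l_Int_M[OF s meet_s_l] by blast
  moreover have "t \<noteq> l"
    using assms(2) l(2) by blast
  ultimately have "l \<subseteq> pg_join s t"
    using concurrent_lines_coplanar[OF s(1) assms(1) l(1) _ l_ne_s[symmetric] _ pg_point_l_Int_s]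
      \<open>t \<noteq> s\<close> by blast
  moreover have "pg_join s t \<subseteq> M"
    using subspace_M s(2) assms(2) by (simp add: pg_join_subset_iff)
  ultimately show False
    using l(2) by blast
qed

lemma pg_solid_join_l:
  assumes "x \<in> L" "x \<subseteq> M" "x \<noteq> s"
  shows "pg_solid (pg_join x l)"
  using pg_solid_join_of_not_meet[OF pg_line_of_L[OF assms(1)] pg_line_of_L[OF l(1)]]
    unique_meeting_line assms by blast


lemma ne_s_of_meet_in_point: "pg_meet_in_point x s P \<Longrightarrow> x \<noteq> s"
  using dim_of_L[OF s(1)] unfolding pg_meet_in_point_def pg_point_def by auto

text \<open>\<open>s\<close> is the line through \<open>x \<inter> s \<subseteq> x\<close> and \<open>l \<inter> s \<subseteq> l\<close>, two distinct points.\<close>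

lemma s_subset_join_l:
  assumes "x \<in> L" "x \<subseteq> M" "pg_meet_in_point x s P"
  shows "s \<subseteq> pg_join x l"
proof -
  have P: "pg_point P" "P \<subseteq> x" "P \<subseteq> s"
    using assms(3) unfolding pg_meet_in_point_def by auto
  have "P \<noteq> l \<inter> s"
  proof
    assume "P = l \<inter> s"
    then have "pg_meet x l"
      using P unfolding pg_meet_def by blast
    then show False
      using unique_meeting_line assms(1,2) ne_s_of_meet_in_point[OF assms(3)] by blast
  qed
  then have "s = pg_join P (l \<inter> s)"
    using pg_line_eq_pg_join_points[OF P(1) pg_point_l_Int_s _ pg_line_of_L[OF s(1)] P(3)] by blast
  moreover have "pg_join P (l \<inter> s) \<subseteq> pg_join x l"
    using P(2) pg_join_superset[where X=x and Y=l] by (auto simp: pg_join_subset_iff)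
  ultimately show ?thesis
    by simp
qed

lemma lines_in_join_l:
  assumes "x \<in> L" "x \<subseteq> M" "pg_meet_in_point x s P"
  shows "lines_in L (pg_join x l) = lines_in L (pg_join x s) \<union> lines_in L (pg_join s l)"
proof -
  have xs: "x \<noteq> s" "pg_meet x s"
    using ne_s_of_meet_in_point[OF assms(3)] assms(3)
    unfolding pg_meet_in_point_def pg_meet_def by auto
  have plane: "pg_plane (pg_join x s)"
    using pg_plane_join_lines[OF assms(1) s(1) xs] .
  have "pg_join x s \<subseteq> M"
    using subspace_M assms(2) s(2) by (simp add: pg_join_subset_iff)
  then have "pg_join x s \<noteq> pg_join s l"
    using pg_join_superset(2)[where X=s and Y=l] l(2) by blast
  moreover have "pg_join x s \<subseteq> pg_join x l" "pg_join s l \<subseteq> pg_join x l"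
    using s_subset_join_l[OF assms] pg_join_superset[where X=x and Y=l] by (simp_all add: pg_join_subset_iff)
  moreover have "card (lines_in L (pg_join x s)) = CARD('a) + 1"
    "card (lines_in L (pg_join s l)) = CARD('a) + 1"
    using card_lines_in_join_lines[OF assms(1) s(1) xs]
      card_lines_in_join_lines[OF s(1) l(1) l_ne_s[symmetric] meet_s_l] by simp_all
  ultimately show ?thesis
    using lines_in_solid_eq_Un_planes[OF pg_solid_join_l[OF assms(1,2) xs(1)] plane pg_plane_s_l]
      mem_lines_in_pg_join(2)[OF s(1)] mem_lines_in_pg_join(1)[OF s(1)] by blast
qed

lemma lines_in_join_l_pencil:
  assumes Pt: "cond_Pt L" and "x \<in> L" "x \<subseteq> M" "pg_meet_in_point x s P"
  shows "lines_in L (pg_join x l) = {z \<in> L. P \<subseteq> z} \<union> lines_in L (pg_join s l)"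
proof -
  have "pg_point P" "P \<subseteq> x" "P \<subseteq> s"
    using assms(4) unfolding pg_meet_in_point_def by auto
  then show ?thesis
    using lines_in_join_l[OF assms(2-4)]
      lines_in_plane_eq_pencil[OF Pt assms(2) s(1) ne_s_of_meet_in_point[OF assms(4)]]
    by simp
qed

lemma lines_in_joins_l_Int_meeting:
  assumes Pt: "cond_Pt L"
    and "x \<in> L" "x \<subseteq> M" "pg_meet_in_point x s P" "y \<in> L" "y \<subseteq> M" "pg_meet_in_point y s Q"
  shows "lines_in L (pg_join x l) \<inter> lines_in L (pg_join y l) =
    (if P = Q then lines_in L (pg_join x l) else lines_in L (pg_join s l))"
proof -
  have P: "pg_point P" "P \<subseteq> s" and Q: "pg_point Q" "Q \<subseteq> s"
    using assms(4,7) unfolding pg_meet_in_point_def by auto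
  have "z = s" if "P \<noteq> Q" "z \<in> L" "P \<subseteq> z" "Q \<subseteq> z" for z
    using pg_line_eq_pg_join_points[OF P(1) Q(1) \<open>P \<noteq> Q\<close> pg_line_of_L[OF that(2)] that(3,4)]
      pg_line_eq_pg_join_points[OF P(1) Q(1) \<open>P \<noteq> Q\<close> pg_line_of_L[OF s(1)] P(2) Q(2)]
    by simp
  then show ?thesis
    unfolding lines_in_join_l_pencil[OF assms(1-4)] lines_in_join_l_pencil[OF assms(1,5-7)]
    using mem_lines_in_pg_join(1)[OF s(1), of l] by auto
qed

lemma s_not_subset_join_l:
  assumes "y \<in> L" "y \<subseteq> M" "\<not> pg_meet y s"
  shows "\<not> s \<subseteq> pg_join y l"
proof
  assume "s \<subseteq> pg_join y l"
  then have "pg_join y s \<subseteq> pg_join y l"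
    using pg_join_superset by (simp add: pg_join_subset_iff)
  moreover have "y \<noteq> s"
    using assms(3) meet_s_l unfolding pg_meet_def by blast
  then have "vec.dim (pg_join y l) \<le> vec.dim (pg_join y s)"
    using pg_solid_join_l[OF assms(1,2)]
      pg_solid_join_of_not_meet[OF pg_line_of_L[OF assms(1)] pg_line_of_L[OF s(1)] assms(3)]
    unfolding pg_solid_def by simp
  ultimately have "pg_join y s = pg_join y l"
    using vec.subspace_dim_equal[of "pg_join y s" "pg_join y l"] by simp
  moreover have "pg_join y s \<subseteq> M"
    using assms(2) s(2) subspace_M by (simp add: pg_join_subset_iff)
  ultimately show False
    using pg_join_superset(2)[where X=y and Y=l] l(2) by blast
qed


text \<open>A line of the solid \<open>\<langle>x,l\<rangle>\<close> meeting \<open>l\<close> is either \<open>s\<close> itself or lies in the plane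
\<open>\<langle>s,l\<rangle>\<close>, by (a) and (b).\<close>

lemma s_subset_join_meeting_line:
  assumes "x \<in> L" "x \<subseteq> M" "pg_meet_in_point x s P"
    and "m \<in> lines_in L (pg_join x l)" "m \<noteq> l" "pg_meet m l"
  shows "s \<subseteq> pg_join m l"
proof -
  have "m \<in> lines_in L (pg_join x s) \<union> lines_in L (pg_join s l)"
    using lines_in_join_l[OF assms(1-3)] assms(4) by blast
  then show ?thesis
  proof
    assume "m \<in> lines_in L (pg_join x s)"
    moreover have "pg_join x s \<subseteq> M"
      using assms(2) s(2) subspace_M by (simp add: pg_join_subset_iff)
    ultimately have "m \<in> L" "m \<subseteq> M"
      unfolding lines_in_def by auto
    then show ?thesis
      using unique_meeting_line assms(6) pg_join_superset(1)[where X=m and Y=l] by blast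
  next
    assume "m \<in> lines_in L (pg_join s l)"
    then have "pg_join m l = pg_join s l"
      using pg_join_lines_eq[OF _ l(1) assms(5,6) pg_plane_s_l] pg_join_superset(2)[where X=s and Y=l]
      unfolding lines_in_def by blast
    then show ?thesis
      using pg_join_superset(1)[where X=s and Y=l] by simp
  qed
qed

lemma lines_in_joins_l_Int_disjoint:
  assumes "x \<in> L" "x \<subseteq> M" "pg_meet_in_point x s P" "y \<in> L" "y \<subseteq> M" "\<not> pg_meet y s"
  shows "lines_in L (pg_join x l) \<inter> lines_in L (pg_join y l) = {l}"
proof -
  have "x \<noteq> s" "y \<noteq> s"
    using ne_s_of_meet_in_point[OF assms(3)] assms(6) meet_s_l unfolding pg_meet_def by blast+
  then have "pg_solid (pg_join x l)" "pg_solid (pg_join y l)"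
    using pg_solid_join_l assms(1,2,4,5) by blast+
  moreover have "pg_join x l \<noteq> pg_join y l"
    using s_subset_join_l[OF assms(1-3)] s_not_subset_join_l[OF assms(4-6)] by metis
  ultimately have dim_Int: "vec.dim (pg_join x l \<inter> pg_join y l) \<le> 3"
    using dim_Int_less_of_ne[of "pg_join x l" "pg_join y l"] unfolding pg_solid_def by simp
  have "m = l" if m: "m \<in> lines_in L (pg_join x l)" "m \<in> lines_in L (pg_join y l)" for m
  proof (rule ccontr)
    assume "m \<noteq> l"
    have "pg_meet m l"
      using pg_meet_of_dim_le_3[OF _ l(1) _ dim_Int] m pg_join_superset(2)[where Y=l]
      unfolding lines_in_def by (simp add: vec.subspace_inter)
    then have "s \<subseteq> pg_join m l"
      using s_subset_join_meeting_line[OF assms(1-3) m(1) \<open>m \<noteq> l\<close>] by blast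
    moreover have "pg_join m l \<subseteq> pg_join y l"
      using m(2) pg_join_superset(2)[where X=y and Y=l] unfolding lines_in_def
      by (simp add: pg_join_subset_iff)
    ultimately show False
      using s_not_subset_join_l[OF assms(4-6)] by blast
  qed
  then show ?thesis
    using mem_lines_in_pg_join(2)[OF l(1)] by blast
qed
end

theorem lemma5:
  fixes L :: "('a::{field,finite} ^ 'n) set set"
    and M l s :: "('a ^ 'n) set"
  assumes lines: "\<forall>x\<in>L. pg_line x"
    and nonempty: "L \<noteq> {}"
    and Pt: "cond_Pt L" and Pl: "cond_Pl L" and Sd: "cond_Sd L" and To: "cond_To L"
    and M: "pg_subspace M"
    and l: "l \<in> L - lines_in L M"
    and s: "s \<in> lines_in L M"
    and ls: "pg_meet l s"
  shows "(\<forall>t\<in>lines_in L M. pg_meet t l \<longrightarrow> t = s)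
    \<and> (\<forall>lM\<in>lines_in L M. (\<exists>P. pg_meet_in_point lM s P) \<longrightarrow>
          lines_in L (pg_join lM l) = lines_in L (pg_join lM s) \<union> lines_in L (pg_join s l))
    \<and> (\<forall>l1\<in>lines_in L M. \<forall>l2\<in>lines_in L M. \<forall>P Q.
          pg_meet_in_point l1 s P \<and> pg_meet_in_point l2 s Q \<longrightarrow>
          lines_in L (pg_join l1 l) \<inter> lines_in L (pg_join l2 l) =
            (if P = Q then lines_in L (pg_join l1 l) else lines_in L (pg_join s l)))
    \<and> (\<forall>l1\<in>lines_in L M. \<forall>l2\<in>lines_in L M.
          (\<exists>P. pg_meet_in_point l1 s P) \<and> \<not> pg_meet l2 s \<longrightarrow>
          lines_in L (pg_join l1 l) \<inter> lines_in L (pg_join l2 l) = {l})"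
proof -
  interpret external_line L M l s
    using lines Pl Sd M l s ls unfolding pg_subspace_def lines_in_def
    by unfold_locales auto
  have M_lines: "t \<in> L" "t \<subseteq> M" if "t \<in> lines_in L M" for t
    using that unfolding lines_in_def by auto
  show ?thesis
    by (intro conjI)
      (use unique_meeting_line M_lines in blast,
       use lines_in_join_l M_lines in blast,
       use lines_in_joins_l_Int_meeting[OF Pt] M_lines in blast,
       use lines_in_joins_l_Int_disjoint M_lines in blast)
qed

end
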